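(* Let $\Lambda$ be a row-finite $k$-graph with no sources. Suppose that we have a $\Lambda$-projective system on a measure space $(X, \mu)$ with coding maps $\{\tau^n\}_{n\in\mathbb{N}^k}$, and let $\{T_\lambda:\lambda\in\Lambda\}$ be the associated representation of $C^*(\Lambda)$ on $L^2(X, \mu)$. If the representation $\{T_\lambda:\lambda\in\Lambda\}$ is irreducible, then the coding maps $\{\tau^n\}_{n\in\mathbb{N}^k}$ are jointly ergodic with respect to $\mu$.
   Context: A $k$-graph is a countable small category $\Lambda$ with a functor $d:\Lambda\to\mathbb{N}^k$ with unique factorization ($d(\lambda)=m+n$ implies unique $\lambda=\mu\nu$, $d(\mu)=m$, $d(\nu)=n$); vertices $\Lambda^0$ are identity morphisms, $r,s$ range/source, $v\Lambda^n=\{\lambda: r(\lambda)=v, d(\lambda)=n\}$. Row-finite: $v\Lambda^n$ finite; no sources: $v\Lambda^n\ne\emptyset$. $C^*(\Lambda)$: universal $C^*$-algebra generated by partial isometries $s_\lambda$ with $\{s_v\}$ mutually orthogonal projections, $s_\lambda s_\eta=s_{\lambda\eta}$ when $s(\lambda)=r(\eta)$, $s_\lambda^*s_\lambda=s_{s(\lambda)}$, $s_v=\sum_{\lambda\in v\Lambda^n}s_\lambda s_\lambda^*$. A semibranching function system on $(X,\mu)$: measurable $D_i$ ($0<\mu(D_i)<\infty$), measurable $\sigma_i:D_i\to X$ with $R_i=\sigma_i(D_i)$ satisfying $\mu(X\setminus\bigcup R_i)=0$, $\mu(R_i\cap R_j)=0$ for $i\neq j$, $\mu(R_i)<\infty$,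 and $d(\mu\circ\sigma_i)/d\mu>0$ a.e. on $D_i$; coding map $\sigma$ with $\sigma\circ\sigma_i=\mathrm{id}_{D_i}$. A $\Lambda$-semibranching function system: sets $D_\lambda$, maps $\tau_\lambda: D_\lambda\to X$, $\tau^m:X\to X$, such that $\{\tau_\lambda:d(\lambda)=m\}$ is a semibranching function system with coding map $\tau^m$ for each $m$; $\tau_v=\mathrm{id}$; $R_\lambda=\tau_\lambda(D_\lambda)$, $R_\nu\subseteq D_\lambda$ a.e. and $\tau_\lambda\tau_\nu=\tau_{\lambda\nu}$ a.e. for $\nu\in s(\lambda)\Lambda$; $\tau^m\tau^n=\tau^{m+n}$. A $\Lambda$-projective system adds functions $f_\lambda\in L^2(X,\mu)$ with $0\ne d(\mu\circ\tau_\lambda^{-1})/d\mu=|f_\lambda|^2$ and $f_\lambda(f_\nu\circ\tau^{d(\lambda)})=f_{\lambda\nu}$; the associated representation is $T_\lambda f=f_\lambda\cdot(f\circ\tau^{d(\lambda)})$. A family of maps $\{T_i\}$ on $X$ is jointly ergodic with respect to $\mu$ if whenever $A$ is measurable with $\mu(A\,\Delta\, T_i^{-1}(A))=0$ for all $i$, then $\mu(A)=0$ or $\mu(X\setminus A)=0$. *)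

theory Defs
  imports "HOL-Analysis.Analysis"
begin

text \<open>Elements of N^k are represented as functions nat => nat vanishing outside {..<k}.\<close>
definition Nk :: "nat \<Rightarrow> (nat \<Rightarrow> nat) set" where
  "Nk k = {n. \<forall>i\<ge>k. n i = 0}"

definition nk_add :: "(nat \<Rightarrow> nat) \<Rightarrow> (nat \<Rightarrow> nat) \<Rightarrow> (nat \<Rightarrow> nat)" where
  "nk_add m n = (\<lambda>i. m i + n i)"

text \<open>A k-graph: a countable small category with morphism set L, range and source maps r, s
  (objects are identified with identity morphisms), partial composition c (c l m defined
  when s l = r m), and a degree functor d into N^k with unique factorisation.\<close>
definition kgraph :: "nat \<Rightarrow> 'a set \<Rightarrow> ('a \<Rightarrow> 'a) \<Rightarrow> ('a \<Rightarrow> 'a) \<Rightarrow> ('a \<Rightarrow> 'a \<Rightarrow> 'a)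
    \<Rightarrow> ('a \<Rightarrow> nat \<Rightarrow> nat) \<Rightarrow> bool" where
  "kgraph k L r s c d \<longleftrightarrow>
     countable L \<and>
     (\<forall>l\<in>L. r l \<in> L \<and> s l \<in> L \<and> d l \<in> Nk k) \<and>
     (\<forall>l\<in>L. r (r l) = r l \<and> s (r l) = r l \<and> r (s l) = s l \<and> s (s l) = s l) \<and>
     (\<forall>l\<in>L. c (r l) l = l \<and> c l (s l) = l) \<and>
     (\<forall>l\<in>L. \<forall>m\<in>L. s l = r m \<longrightarrow>
         c l m \<in> L \<and> r (c l m) = r l \<and> s (c l m) = s m \<and> d (c l m) = nk_add (d l) (d m)) \<and>
     (\<forall>l\<in>L. \<forall>m\<in>L. \<forall>n\<in>L. s l = r m \<longrightarrow> s m = r n \<longrightarrow> c (c l m) n = c l (c m n)) \<and>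
     (\<forall>l\<in>L. \<forall>m\<in>Nk k. \<forall>n\<in>Nk k. d l = nk_add m n \<longrightarrow>
         (\<exists>!p. fst p \<in> L \<and> snd p \<in> L \<and> s (fst p) = r (snd p) \<and>
               d (fst p) = m \<and> d (snd p) = n \<and> c (fst p) (snd p) = l))"

definition kvertices :: "'a set \<Rightarrow> ('a \<Rightarrow> 'a) \<Rightarrow> 'a set" where
  "kvertices L r = r ` L"

definition row_finite :: "nat \<Rightarrow> 'a set \<Rightarrow> ('a \<Rightarrow> 'a) \<Rightarrow> ('a \<Rightarrow> nat \<Rightarrow> nat) \<Rightarrow> bool" where
  "row_finite k L r d \<longleftrightarrow>
     (\<forall>v\<in>kvertices L r. \<forall>n\<in>Nk k. finite {l\<in>L. r l = v \<and> d l = n})"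

definition no_sources :: "nat \<Rightarrow> 'a set \<Rightarrow> ('a \<Rightarrow> 'a) \<Rightarrow> ('a \<Rightarrow> nat \<Rightarrow> nat) \<Rightarrow> bool" where
  "no_sources k L r d \<longleftrightarrow>
     (\<forall>v\<in>kvertices L r. \<forall>n\<in>Nk k. {l\<in>L. r l = v \<and> d l = n} \<noteq> {})"

text \<open>The Radon--Nikodym derivative of
  mu o sig i with respect to mu on D i is given by rho.\<close>
definition sbfs :: "'x measure \<Rightarrow> 'i set \<Rightarrow> ('i \<Rightarrow> 'x set) \<Rightarrow> ('i \<Rightarrow> 'x \<Rightarrow> 'x)
    \<Rightarrow> ('x \<Rightarrow> 'x) \<Rightarrow> bool" where
  "sbfs M I D sig cod \<longleftrightarrow>
     (\<forall>i\<in>I.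
        D i \<in> sets M \<and> 0 < emeasure M (D i) \<and> emeasure M (D i) < \<infinity> \<and>
        (\<forall>x\<in>D i. sig i x \<in> space M) \<and>
        (\<forall>A\<in>sets M. {x\<in>D i. sig i x \<in> A} \<in> sets M) \<and>
        sig i ` D i \<in> sets M \<and> emeasure M (sig i ` D i) < \<infinity> \<and>
        (\<exists>rho\<in>borel_measurable M.
           (\<forall>A\<in>sets M. A \<subseteq> D i \<longrightarrow>
              sig i ` A \<in> sets M \<and> emeasure M (sig i ` A) = set_nn_integral M A rho) \<and>
           (AE x in M. x \<in> D i \<longrightarrow> 0 < rho x)) \<and>
        (\<forall>x\<in>D i. cod (sig i x) = x)) \<and>
     emeasure M (space M - (\<Union>i\<in>I. sig i ` D i)) = 0 \<and>
     (\<forall>i\<in>I. \<forall>j\<in>I. i \<noteq> j \<longrightarrow> emeasure M (sig i ` D i \<inter> sig j ` D j) = 0) \<and>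
     cod \<in> measurable M M"

definition lambda_sbfs :: "nat \<Rightarrow> 'a set \<Rightarrow> ('a \<Rightarrow> 'a) \<Rightarrow> ('a \<Rightarrow> 'a) \<Rightarrow> ('a \<Rightarrow> 'a \<Rightarrow> 'a)
    \<Rightarrow> ('a \<Rightarrow> nat \<Rightarrow> nat) \<Rightarrow> 'x measure \<Rightarrow> ('a \<Rightarrow> 'x set) \<Rightarrow> ('a \<Rightarrow> 'x \<Rightarrow> 'x)
    \<Rightarrow> ((nat \<Rightarrow> nat) \<Rightarrow> 'x \<Rightarrow> 'x) \<Rightarrow> bool" where
  "lambda_sbfs k L r s c d M D tau tauc \<longleftrightarrow>
     (\<forall>m\<in>Nk k. sbfs M {l\<in>L. d l = m} D tau (tauc m)) \<and>
     (\<forall>v\<in>kvertices L r. \<forall>x\<in>D v. tau v x = x) \<and>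
     (\<forall>l\<in>L. \<forall>n\<in>L. r n = s l \<longrightarrow>
        emeasure M (tau n ` D n - D l) = 0 \<and>
        (AE x in M. ((x \<in> D n \<and> tau n x \<in> D l) \<longleftrightarrow> x \<in> D (c l n)) \<and>
                    (x \<in> D (c l n) \<longrightarrow> tau l (tau n x) = tau (c l n) x))) \<and>
     (\<forall>m\<in>Nk k. \<forall>n\<in>Nk k. \<forall>x\<in>space M. tauc m (tauc n x) = tauc (nk_add m n) x)"

definition L2 :: "'x measure \<Rightarrow> ('x \<Rightarrow> complex) set" where
  "L2 M = {g. g \<in> borel_measurable M \<and> integrable M (\<lambda>x. (cmod (g x))\<^sup>2)}"

definition l2_inner :: "'x measure \<Rightarrow> ('x \<Rightarrow> complex) \<Rightarrow> ('x \<Rightarrow> complex) \<Rightarrow> complex" where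
  "l2_inner M g h = (LINT x|M. g x * cnj (h x))"

definition l2_norm :: "'x measure \<Rightarrow> ('x \<Rightarrow> complex) \<Rightarrow> real" where
  "l2_norm M g = sqrt (LINT x|M. (cmod (g x))\<^sup>2)"

definition lambda_projective_system :: "nat \<Rightarrow> 'a set \<Rightarrow> ('a \<Rightarrow> 'a) \<Rightarrow> ('a \<Rightarrow> 'a)
    \<Rightarrow> ('a \<Rightarrow> 'a \<Rightarrow> 'a) \<Rightarrow> ('a \<Rightarrow> nat \<Rightarrow> nat) \<Rightarrow> 'x measure \<Rightarrow> ('a \<Rightarrow> 'x set)
    \<Rightarrow> ('a \<Rightarrow> 'x \<Rightarrow> 'x) \<Rightarrow> ((nat \<Rightarrow> nat) \<Rightarrow> 'x \<Rightarrow> 'x) \<Rightarrow> ('a \<Rightarrow> 'x \<Rightarrow> complex) \<Rightarrow> bool" where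
  "lambda_projective_system k L r s c d M D tau tauc f \<longleftrightarrow>
     lambda_sbfs k L r s c d M D tau tauc \<and>
     (\<forall>l\<in>L. f l \<in> L2 M \<and> \<not> (AE x in M. f l x = 0) \<and>
        (\<forall>A\<in>sets M. emeasure M {x\<in>D l. tau l x \<in> A}
                      = (\<integral>\<^sup>+x\<in>A. ennreal ((cmod (f l x))\<^sup>2) \<partial>M))) \<and>
     (\<forall>l\<in>L. \<forall>n\<in>L. r n = s l \<longrightarrow>
        (AE x in M. f l x * f n (tauc (d l) x) = f (c l n) x))"

definition kg_rep :: "('a \<Rightarrow> 'x \<Rightarrow> complex) \<Rightarrow> ((nat \<Rightarrow> nat) \<Rightarrow> 'x \<Rightarrow> 'x) \<Rightarrow> ('a \<Rightarrow> nat \<Rightarrow> nat)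
    \<Rightarrow> 'a \<Rightarrow> ('x \<Rightarrow> complex) \<Rightarrow> ('x \<Rightarrow> complex)" where
  "kg_rep f tauc d l g = (\<lambda>x. f l x * g (tauc (d l) x))"

definition l2_closed_subspace :: "'x measure \<Rightarrow> ('x \<Rightarrow> complex) set \<Rightarrow> bool" where
  "l2_closed_subspace M V \<longleftrightarrow>
     V \<subseteq> L2 M \<and> (\<lambda>x. 0) \<in> V \<and>
     (\<forall>g\<in>V. \<forall>h\<in>V. (\<lambda>x. g x + h x) \<in> V) \<and>
     (\<forall>a. \<forall>g\<in>V. (\<lambda>x. a * g x) \<in> V) \<and>
     (\<forall>gs g. (\<forall>n. gs n \<in> V) \<and> g \<in> L2 M \<and>
        (\<lambda>n. l2_norm M (\<lambda>x. gs n x - g x)) \<longlonglongrightarrow> 0 \<longrightarrow> g \<in> V)"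

text \<open>V is invariant under T_l and under the adjoint T_l^* (the adjoint image of g \<in> V lies in V).\<close>
definition rep_invariant :: "'x measure \<Rightarrow> 'a set \<Rightarrow> ('a \<Rightarrow> ('x \<Rightarrow> complex) \<Rightarrow> ('x \<Rightarrow> complex))
    \<Rightarrow> ('x \<Rightarrow> complex) set \<Rightarrow> bool" where
  "rep_invariant M L T V \<longleftrightarrow>
     (\<forall>l\<in>L. \<forall>g\<in>V. T l g \<in> V) \<and>
     (\<forall>l\<in>L. \<forall>g\<in>V. \<exists>h\<in>V. \<forall>u\<in>L2 M. l2_inner M (T l u) g = l2_inner M u h)"

definition irreducible_rep :: "'x measure \<Rightarrow> 'a set \<Rightarrow> ('a \<Rightarrow> ('x \<Rightarrow> complex) \<Rightarrow> ('x \<Rightarrow> complex))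
    \<Rightarrow> bool" where
  "irreducible_rep M L T \<longleftrightarrow>
     (\<forall>V. l2_closed_subspace M V \<and> rep_invariant M L T V \<longrightarrow>
        (\<forall>g\<in>V. AE x in M. g x = 0) \<or> L2 M \<subseteq> V)"

definition jointly_ergodic :: "'x measure \<Rightarrow> 'j set \<Rightarrow> ('j \<Rightarrow> 'x \<Rightarrow> 'x) \<Rightarrow> bool" where
  "jointly_ergodic M J T \<longleftrightarrow>
     (\<forall>A\<in>sets M. (\<forall>j\<in>J. emeasure M ((A - (T j -` A \<inter> space M)) \<union> ((T j -` A \<inter> space M) - A)) = 0)
        \<longrightarrow> emeasure M A = 0 \<or> emeasure M (space M - A) = 0)"

end

(* If A is invariant under all coding maps, the subspace L2(A) of functions vanishing off A
   is invariant under every T_l g = f_l (g o tau^(d l)), and also under the adjoint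
   T_l^* g = 1_(D_l) (g / f_l) o tau_l, which is computed by the change of variables
   x = tau_l y with Jacobian |f_l|^2.  Irreducibility forces L2(A) to be zero or everything.
   The ranges of the degree-0 maps make mu sigma-finite, so the indicator of a piece of finite
   positive measure of A, resp. of its complement, shows that A is null or conull. *)

theory Submission
  imports Defs
begin

definition L2_on :: "'x measure \<Rightarrow> 'x set \<Rightarrow> ('x \<Rightarrow> complex) set" where
  "L2_on M A = {g \<in> L2 M. AE x in M. x \<notin> A \<longrightarrow> g x = 0}"

lemma L2_measurable: "g \<in> L2 M \<Longrightarrow> g \<in> borel_measurable M"
  by (simp add: L2_def)

lemma L2_integrable: "g \<in> L2 M \<Longrightarrow> integrable M (\<lambda>x. (cmod (g x))\<^sup>2)"
  by (simp add: L2_def)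

lemma cmod_add_squared_le:
  fixes z w :: complex
  shows "(cmod (z + w))\<^sup>2 \<le> 2 * (cmod z)\<^sup>2 + 2 * (cmod w)\<^sup>2"
proof -
  have "(cmod (z + w))\<^sup>2 \<le> (cmod z + cmod w)\<^sup>2"
    by (simp add: norm_triangle_ineq power_mono)
  moreover have "0 \<le> (cmod z - cmod w)\<^sup>2" by simp
  ultimately show ?thesis by (simp add: power2_diff power2_sum)
qed

lemma L2_linear_combination:
  assumes g: "g \<in> L2 M" and h: "h \<in> L2 M"
  shows "(\<lambda>x. a * g x + b * h x) \<in> L2 M"
proof -
  have [measurable]: "g \<in> borel_measurable M" "h \<in> borel_measurable M"
    using g h by (simp_all add: L2_measurable)
  have "integrable M (\<lambda>x. 2 * (cmod a)\<^sup>2 * (cmod (g x))\<^sup>2 + 2 * (cmod b)\<^sup>2 * (cmod (h x))\<^sup>2)"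
    using g h by (intro Bochner_Integration.integrable_add integrable_mult_right L2_integrable)
  moreover have "(\<lambda>x. (cmod (a * g x + b * h x))\<^sup>2) \<in> borel_measurable M"
    by measurable
  moreover have "norm ((cmod (a * g x + b * h x))\<^sup>2)
      \<le> norm (2 * (cmod a)\<^sup>2 * (cmod (g x))\<^sup>2 + 2 * (cmod b)\<^sup>2 * (cmod (h x))\<^sup>2)" for x
    using cmod_add_squared_le[of "a * g x" "b * h x"] by (simp add: norm_mult power_mult_distrib)
  ultimately have "integrable M (\<lambda>x. (cmod (a * g x + b * h x))\<^sup>2)"
    by (rule Bochner_Integration.integrable_bound[OF _ _ AE_I2])
  then show ?thesis by (simp add: L2_def)
qed

lemma L2_diff: "g \<in> L2 M \<Longrightarrow> h \<in> L2 M \<Longrightarrow> (\<lambda>x. g x - h x) \<in> L2 M"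
  using L2_linear_combination[of g M h 1 "-1"] by simp

lemma borel_measurable_cnj [measurable (raw)]:
  "f \<in> borel_measurable M \<Longrightarrow> (\<lambda>x. cnj (f x)) \<in> borel_measurable M"
  using borel_measurable_continuous_onI[OF continuous_on_cnj[OF continuous_on_id]]
  by (rule measurable_compose[rotated])

lemma indicator_L2:
  assumes "B \<in> sets M" "emeasure M B < \<infinity>"
  shows "(\<lambda>x. indicator B x :: complex) \<in> L2 M"
proof -
  have "(\<lambda>x. (cmod (indicator B x :: complex))\<^sup>2) = indicator B"
    by (auto simp: indicator_def)
  then show ?thesis using assms by (simp add: L2_def)
qed

lemma L2_on_limit:
  assumes A: "A \<in> sets M" and gs: "\<And>n. gs n \<in> L2_on M A" and g: "g \<in> L2 M"
    and lim: "(\<lambda>n. l2_norm M (\<lambda>x. gs n x - g x)) \<longlonglongrightarrow> 0"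
  shows "g \<in> L2_on M A"
proof -
  define I where "I = (LINT x|M. (cmod (g x))\<^sup>2 * indicator (space M - A) x)"
  have int_I: "integrable M (\<lambda>x. (cmod (g x))\<^sup>2 * indicator (space M - A) x)"
    using A g by (intro integrable_real_mult_indicator L2_integrable) auto
  have "I \<le> (l2_norm M (\<lambda>x. gs n x - g x))\<^sup>2" for n
  proof -
    have gs_n: "gs n \<in> L2 M" "AE x in M. x \<notin> A \<longrightarrow> gs n x = 0"
      using gs[of n] by (auto simp: L2_on_def)
    then have int_diff: "integrable M (\<lambda>x. (cmod (gs n x - g x))\<^sup>2)"
      using g by (intro L2_integrable L2_diff)
    have "I \<le> (LINT x|M. (cmod (gs n x - g x))\<^sup>2)"
      unfolding I_def using int_I int_diff
    proof (rule integral_mono_AE)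
      show "AE x in M. (cmod (g x))\<^sup>2 * indicator (space M - A) x \<le> (cmod (gs n x - g x))\<^sup>2"
        using gs_n(2) AE_space by eventually_elim (auto simp: indicator_def norm_minus_commute)
    qed
    also have "\<dots> = (l2_norm M (\<lambda>x. gs n x - g x))\<^sup>2"
      by (simp add: l2_norm_def integral_nonneg_AE)
    finally show ?thesis .
  qed
  then have "I \<le> 0\<^sup>2"
    by (intro LIMSEQ_le_const[OF tendsto_power[OF lim]]) auto
  moreover have "0 \<le> I" unfolding I_def by (intro integral_nonneg_AE) auto
  ultimately have "I = 0" by simp
  then have "AE x in M. (cmod (g x))\<^sup>2 * indicator (space M - A) x = 0"
    using integral_nonneg_eq_0_iff_AE[OF int_I] by (simp add: I_def)
  then have "AE x in M. x \<notin> A \<longrightarrow> g x = 0"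
    using AE_space by eventually_elim (auto simp: indicator_def)
  with g show ?thesis by (simp add: L2_on_def)
qed

lemma l2_closed_subspace_L2_on:
  assumes A: "A \<in> sets M"
  shows "l2_closed_subspace M (L2_on M A)"
  unfolding l2_closed_subspace_def
proof (intro conjI allI ballI impI)
  show "L2_on M A \<subseteq> L2 M" by (auto simp: L2_on_def)
  show "(\<lambda>x. 0) \<in> L2_on M A" by (simp add: L2_on_def L2_def)
next
  fix g h assume "g \<in> L2_on M A" "h \<in> L2_on M A"
  then show "(\<lambda>x. g x + h x) \<in> L2_on M A"
    using L2_linear_combination[of g M h 1 1] by (auto simp: L2_on_def elim: AE_mp)
next
  fix a g assume "g \<in> L2_on M A"
  then show "(\<lambda>x. a * g x) \<in> L2_on M A"
    using L2_linear_combination[of g M g a 0] by (auto simp: L2_on_def elim: AE_mp)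
next
  fix gs g
  assume "(\<forall>n. gs n \<in> L2_on M A) \<and> g \<in> L2 M \<and> (\<lambda>n. l2_norm M (\<lambda>x. gs n x - g x)) \<longlonglongrightarrow> 0"
  then show "g \<in> L2_on M A" using L2_on_limit[OF A] by blast
qed

text \<open>The data of one path \<open>l\<close> of a \<open>\<Lambda>\<close>-projective system:
  \<open>D = D l\<close>, \<open>t = \<tau>\<^sub>l\<close>, \<open>tc = \<tau>\<^bsup>d(l)\<^esup>\<close> and \<open>fl = f l\<close>.\<close>

locale projective_branch =
  fixes M :: "'x measure" and D :: "'x set" and t tc :: "'x \<Rightarrow> 'x" and fl :: "'x \<Rightarrow> complex"
  assumes D_sets: "D \<in> sets M"
    and t_preimage: "A \<in> sets M \<Longrightarrow> {x\<in>D. t x \<in> A} \<in> sets M"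
    and t_space: "x \<in> D \<Longrightarrow> t x \<in> space M"
    and tc_t: "x \<in> D \<Longrightarrow> tc (t x) = x"
    and tc_measurable: "tc \<in> measurable M M"
    and fl_L2: "fl \<in> L2 M"
    and emeasure_preimage:
      "A \<in> sets M \<Longrightarrow> emeasure M {x\<in>D. t x \<in> A} = (\<integral>\<^sup>+x\<in>A. ennreal ((cmod (fl x))\<^sup>2) \<partial>M)"
begin

lemma fl_measurable: "fl \<in> borel_measurable M"
  using fl_L2 by (rule L2_measurable)

lemma t_measurable: "t \<in> measurable (restrict_space M D) M"
proof (rule measurableI)
  show "x \<in> space (restrict_space M D) \<Longrightarrow> t x \<in> space M" for x
    using t_space by (simp add: space_restrict_space)
  fix A assume "A \<in> sets M"
  moreover have "t -` A \<inter> space (restrict_space M D) = {x\<in>D. t x \<in> A}"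
    using sets.sets_into_space[OF D_sets] by (auto simp: space_restrict_space)
  ultimately show "t -` A \<inter> space (restrict_space M D) \<in> sets (restrict_space M D)"
    using t_preimage D_sets by (auto simp: sets_restrict_space_iff)
qed

lemma distr_t: "distr (restrict_space M D) M t = density M (\<lambda>x. ennreal ((cmod (fl x))\<^sup>2))"
proof (rule measure_eqI)
  fix A assume "A \<in> sets (distr (restrict_space M D) M t)"
  then have A: "A \<in> sets M" by simp
  have "t -` A \<inter> space (restrict_space M D) = {x\<in>D. t x \<in> A}"
    using sets.sets_into_space[OF D_sets] by (auto simp: space_restrict_space)
  then have "emeasure (distr (restrict_space M D) M t) A = emeasure M {x\<in>D. t x \<in> A}"
    using A D_sets t_measurable by (simp add: emeasure_distr emeasure_restrict_space)
  also have "\<dots> = emeasure (density M (\<lambda>x. ennreal ((cmod (fl x))\<^sup>2))) A"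
    using A fl_measurable by (simp add: emeasure_preimage emeasure_density)
  finally show "emeasure (distr (restrict_space M D) M t) A
      = emeasure (density M (\<lambda>x. ennreal ((cmod (fl x))\<^sup>2))) A" .
qed simp

lemma
  fixes F :: "'x \<Rightarrow> 'b::{banach, second_countable_topology}"
  assumes F: "F \<in> borel_measurable M"
  shows integrable_change_of_variables:
      "integrable M (\<lambda>x. (cmod (fl x))\<^sup>2 *\<^sub>R F x) \<longleftrightarrow> integrable M (\<lambda>y. indicator D y *\<^sub>R F (t y))"
    and integral_change_of_variables:
      "(\<integral>x. (cmod (fl x))\<^sup>2 *\<^sub>R F x \<partial>M) = (\<integral>y. indicator D y *\<^sub>R F (t y) \<partial>M)"
proof -
  have D: "D \<inter> space M \<in> sets M" using D_sets by simp
  have fl2: "(\<lambda>x. (cmod (fl x))\<^sup>2) \<in> borel_measurable M" using fl_measurable by measurable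
  have "integrable M (\<lambda>x. (cmod (fl x))\<^sup>2 *\<^sub>R F x)
      \<longleftrightarrow> integrable (density M (\<lambda>x. ennreal ((cmod (fl x))\<^sup>2))) F"
    using integrable_density[OF F fl2] by simp
  also have "\<dots> \<longleftrightarrow> integrable (restrict_space M D) (\<lambda>y. F (t y))"
    unfolding distr_t[symmetric] by (rule integrable_distr_eq[OF t_measurable F])
  also have "\<dots> \<longleftrightarrow> integrable M (\<lambda>y. indicator D y *\<^sub>R F (t y))"
    by (rule integrable_restrict_space[OF D])
  finally show "integrable M (\<lambda>x. (cmod (fl x))\<^sup>2 *\<^sub>R F x) \<longleftrightarrow> integrable M (\<lambda>y. indicator D y *\<^sub>R F (t y))" .
  have "(\<integral>x. (cmod (fl x))\<^sup>2 *\<^sub>R F x \<partial>M)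
      = integral\<^sup>L (density M (\<lambda>x. ennreal ((cmod (fl x))\<^sup>2))) F"
    using integral_density[OF F fl2] by simp
  also have "\<dots> = integral\<^sup>L (restrict_space M D) (\<lambda>y. F (t y))"
    unfolding distr_t[symmetric] by (rule integral_distr[OF t_measurable F])
  also have "\<dots> = (\<integral>y. indicator D y *\<^sub>R F (t y) \<partial>M)"
    by (rule integral_restrict_space[OF D])
  finally show "(\<integral>x. (cmod (fl x))\<^sup>2 *\<^sub>R F x \<partial>M) = (\<integral>y. indicator D y *\<^sub>R F (t y) \<partial>M)" .
qed

lemma null_preimage:
  assumes "N \<in> null_sets M"
  shows "{y\<in>D. t y \<in> N} \<in> null_sets M"
  using assms nn_integral_null_set[OF assms, of "\<lambda>x. ennreal ((cmod (fl x))\<^sup>2)"]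
  by (simp add: null_sets_def emeasure_preimage t_preimage)

lemma AE_comp_t:
  assumes "AE x in M. P x"
  shows "AE y in M. y \<in> D \<longrightarrow> P (t y)"
proof -
  obtain N where N: "{x\<in>space M. \<not> P x} \<subseteq> N" "N \<in> null_sets M"
    using assms by (auto simp: eventually_ae_filter)
  show ?thesis
    by (rule AE_I'[OF null_preimage[OF N(2)]]) (use N(1) t_space in auto)
qed

lemma AE_comp_tc:
  assumes "AE x in M. P x"
  shows "AE x in M. fl x \<noteq> 0 \<longrightarrow> P (tc x)"
proof -
  obtain N where N: "{x\<in>space M. \<not> P x} \<subseteq> N" "N \<in> null_sets M"
    using assms by (auto simp: eventually_ae_filter)
  define E where "E = tc -` N \<inter> space M"
  have E: "E \<in> sets M"
    unfolding E_def using N(2) tc_measurable by (auto intro: measurable_sets)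
  \<comment> \<open>As \<open>tc \<circ> t = id\<close> on \<open>D\<close>, the density \<open>|fl|\<^sup>2\<close> gives no mass to \<open>tc -` N\<close>.\<close>
  have "{y\<in>D. t y \<in> E} \<subseteq> N"
    using tc_t t_space by (auto simp: E_def)
  then have "{y\<in>D. t y \<in> E} \<in> null_sets M"
    using N(2) t_preimage[OF E] by (blast intro: null_sets_subset)
  then have "(\<integral>\<^sup>+x. ennreal ((cmod (fl x))\<^sup>2) * indicator E x \<partial>M) = 0"
    using E by (simp add: emeasure_preimage null_sets_def)
  then have "AE x in M. x \<in> E \<longrightarrow> fl x = 0"
    using E fl_measurable by (subst (asm) nn_integral_0_iff_AE) (auto elim!: AE_mp simp: indicator_def)
  then show ?thesis
    by (rule AE_mp) (use N(1) in \<open>auto simp: E_def intro!: AE_I2 measurable_space[OF tc_measurable]\<close>)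
qed

lemma L2_comp_tc:
  assumes g: "g \<in> L2 M"
  shows "(\<lambda>x. fl x * g (tc x)) \<in> L2 M"
proof -
  have [measurable]: "g \<in> borel_measurable M" "tc \<in> measurable M M"
    using g tc_measurable by (simp_all add: L2_measurable)
  have "integrable M (\<lambda>y. indicator D y *\<^sub>R (cmod (g y))\<^sup>2)"
    using g D_sets by (intro integrable_mult_indicator L2_integrable)
  also have "(\<lambda>y. indicator D y *\<^sub>R (cmod (g y))\<^sup>2) = (\<lambda>y. indicator D y *\<^sub>R (cmod (g (tc (t y))))\<^sup>2)"
    using tc_t by (auto simp: indicator_def)
  finally have "integrable M (\<lambda>x. (cmod (fl x))\<^sup>2 *\<^sub>R (cmod (g (tc x)))\<^sup>2)"
    by (subst integrable_change_of_variables) auto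
  moreover have "(\<lambda>x. fl x * g (tc x)) \<in> borel_measurable M"
    using fl_measurable by measurable
  ultimately show ?thesis
    by (simp add: L2_def norm_mult power_mult_distrib)
qed

definition adjoint :: "('x \<Rightarrow> complex) \<Rightarrow> 'x \<Rightarrow> complex" where
  "adjoint g = (\<lambda>y. indicator D y *\<^sub>R (g (t y) / fl (t y)))"

lemma adjoint_L2:
  assumes g: "g \<in> L2 M"
  shows "adjoint g \<in> L2 M"
proof -
  have [measurable]: "g \<in> borel_measurable M" "fl \<in> borel_measurable M"
    using g fl_measurable by (simp_all add: L2_measurable)
  have "(\<lambda>y. g (t y) / fl (t y)) \<in> borel_measurable (restrict_space M D)"
    using t_measurable by measurable
  then have "adjoint g \<in> borel_measurable M"
    unfolding adjoint_def using D_sets by (subst (asm) borel_measurable_restrict_space_iff) auto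
  moreover
  \<comment> \<open>Where \<open>fl\<close> vanishes, \<open>g / fl\<close> is \<open>0\<close>, so \<open>|fl|\<^sup>2 |g / fl|\<^sup>2 \<le> |g|\<^sup>2\<close> everywhere.\<close>
  have "integrable M (\<lambda>x. (cmod (fl x))\<^sup>2 *\<^sub>R (cmod (g x / fl x))\<^sup>2)"
  proof (rule Bochner_Integration.integrable_bound[OF L2_integrable[OF g] _ AE_I2])
    show "(\<lambda>x. (cmod (fl x))\<^sup>2 *\<^sub>R (cmod (g x / fl x))\<^sup>2) \<in> borel_measurable M"
      by measurable
    show "norm ((cmod (fl x))\<^sup>2 *\<^sub>R (cmod (g x / fl x))\<^sup>2) \<le> norm ((cmod (g x))\<^sup>2)" for x
      by (cases "fl x = 0") (simp_all add: norm_divide power_divide)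
  qed
  then have "integrable M (\<lambda>y. indicator D y *\<^sub>R (cmod (g (t y) / fl (t y)))\<^sup>2)"
    by (subst (asm) integrable_change_of_variables) auto
  moreover have "(\<lambda>y. indicator D y *\<^sub>R (cmod (g (t y) / fl (t y)))\<^sup>2) = (\<lambda>y. (cmod (adjoint g y))\<^sup>2)"
    by (auto simp: adjoint_def indicator_def)
  ultimately show ?thesis by (simp add: L2_def)
qed

lemma inner_adjoint:
  assumes u: "u \<in> L2 M" and g: "g \<in> L2 M"
  shows "l2_inner M (\<lambda>x. fl x * u (tc x)) g = l2_inner M u (adjoint g)"
proof -
  have [measurable]: "u \<in> borel_measurable M" "g \<in> borel_measurable M" "tc \<in> measurable M M"
    "fl \<in> borel_measurable M"
    using u g tc_measurable fl_measurable by (simp_all add: L2_measurable)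
  have "l2_inner M u (adjoint g) = (\<integral>y. indicator D y *\<^sub>R (u (tc (t y)) * cnj (g (t y) / fl (t y))) \<partial>M)"
    unfolding l2_inner_def adjoint_def
    by (rule Bochner_Integration.integral_cong) (auto simp: indicator_def tc_t)
  also have "\<dots> = (\<integral>x. (cmod (fl x))\<^sup>2 *\<^sub>R (u (tc x) * cnj (g x / fl x)) \<partial>M)"
    by (rule integral_change_of_variables[symmetric]) measurable
  also have "\<dots> = (\<integral>x. fl x * u (tc x) * cnj (g x) \<partial>M)"
  proof (rule Bochner_Integration.integral_cong)
    fix x
    show "(cmod (fl x))\<^sup>2 *\<^sub>R (u (tc x) * cnj (g x / fl x)) = fl x * u (tc x) * cnj (g x)"
      using complex_norm_square[of "fl x"]
      by (cases "fl x = 0") (simp_all add: scaleR_conv_of_real field_simps)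
  qed simp
  finally show ?thesis by (simp add: l2_inner_def)
qed

lemma L2_on_invariant:
  assumes inv: "AE x in M. tc x \<in> A \<longleftrightarrow> x \<in> A" and g: "g \<in> L2_on M A"
  shows "(\<lambda>x. fl x * g (tc x)) \<in> L2_on M A"
    and "adjoint g \<in> L2_on M A"
proof -
  have g_L2: "g \<in> L2 M" and g_off: "AE x in M. x \<notin> A \<longrightarrow> g x = 0"
    using g by (auto simp: L2_on_def)
  have "AE x in M. x \<notin> A \<longrightarrow> fl x * g (tc x) = 0"
    using AE_comp_tc[OF g_off] inv by eventually_elim auto
  then show "(\<lambda>x. fl x * g (tc x)) \<in> L2_on M A"
    using L2_comp_tc[OF g_L2] by (simp add: L2_on_def)
  have "AE y in M. y \<in> D \<longrightarrow> (tc (t y) \<in> A \<longleftrightarrow> t y \<in> A) \<and> (t y \<notin> A \<longrightarrow> g (t y) = 0)"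
    using inv g_off by (intro AE_comp_t) (auto elim: AE_mp)
  then have "AE y in M. y \<notin> A \<longrightarrow> adjoint g y = 0"
    by eventually_elim (auto simp: adjoint_def tc_t)
  then show "adjoint g \<in> L2_on M A"
    using adjoint_L2[OF g_L2] by (simp add: L2_on_def)
qed

end

lemma degree_in_Nk: "kgraph k L r s c d \<Longrightarrow> l \<in> L \<Longrightarrow> d l \<in> Nk k"
  by (simp add: kgraph_def)

lemma projective_branch_of_path:
  assumes "kgraph k L r s c d" and "lambda_projective_system k L r s c d M D tau tauc f"
    and l: "l \<in> L"
  shows "projective_branch M (D l) (tau l) (tauc (d l)) (f l)"
proof -
  have "sbfs M {l'\<in>L. d l' = d l} D tau (tauc (d l))"
    using assms(2) degree_in_Nk[OF assms(1) l]
    by (simp add: lambda_projective_system_def lambda_sbfs_def)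
  then show ?thesis
    using assms(2) l by (auto simp: sbfs_def lambda_projective_system_def projective_branch_def)
qed

lemma AE_invariant_of_null_symdiff:
  assumes A: "A \<in> sets M" and T: "T \<in> measurable M M"
    and null: "emeasure M ((A - (T -` A \<inter> space M)) \<union> ((T -` A \<inter> space M) - A)) = 0"
  shows "AE x in M. T x \<in> A \<longleftrightarrow> x \<in> A"
proof -
  have "(A - (T -` A \<inter> space M)) \<union> ((T -` A \<inter> space M) - A) \<in> null_sets M"
    using A T null by (auto simp: null_sets_def intro: measurable_sets)
  then show ?thesis
    by (rule AE_I') (use sets.sets_into_space[OF A] in auto)
qed

lemma rep_invariant_L2_on:
  assumes kg: "kgraph k L r s c d" and ps: "lambda_projective_system k L r s c d M D tau tauc f"
    and A: "A \<in> sets M"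
    and inv: "\<forall>j\<in>Nk k. emeasure M ((A - (tauc j -` A \<inter> space M)) \<union> ((tauc j -` A \<inter> space M) - A)) = 0"
  shows "rep_invariant M L (kg_rep f tauc d) (L2_on M A)"
  unfolding rep_invariant_def
proof (intro conjI ballI)
  fix l g assume l: "l \<in> L" and g: "g \<in> L2_on M A"
  interpret projective_branch M "D l" "tau l" "tauc (d l)" "f l"
    by (rule projective_branch_of_path[OF kg ps l])
  have A_inv: "AE x in M. tauc (d l) x \<in> A \<longleftrightarrow> x \<in> A"
    using inv degree_in_Nk[OF kg l] by (intro AE_invariant_of_null_symdiff[OF A tc_measurable]) auto
  show "kg_rep f tauc d l g \<in> L2_on M A"
    unfolding kg_rep_def by (rule L2_on_invariant(1)[OF A_inv g])
  show "\<exists>h\<in>L2_on M A. \<forall>u\<in>L2 M. l2_inner M (kg_rep f tauc d l u) g = l2_inner M u h"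
    using L2_on_invariant(2)[OF A_inv g] inner_adjoint g
    unfolding kg_rep_def L2_on_def by blast
qed

lemma sbfs_sigma_finite:
  assumes sb: "sbfs M I D sig cod" and I: "countable I"
  shows "sigma_finite_measure M"
proof
  let ?R = "\<lambda>i. sig i ` D i"
  let ?cover = "insert (space M - (\<Union>i\<in>I. ?R i)) (?R ` I)"
  have R: "?R i \<in> sets M" "emeasure M (?R i) < \<infinity>" if "i \<in> I" for i
    using sb that by (auto simp: sbfs_def)
  have "space M - (\<Union>i\<in>I. ?R i) \<in> null_sets M"
    using sb R I by (auto simp: sbfs_def null_sets_def intro!: sets.countable_UN'')
  then show "\<exists>A. countable A \<and> A \<subseteq> sets M \<and> \<Union> A = space M \<and> (\<forall>a\<in>A. emeasure M a \<noteq> \<infinity>)"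
    using R I sets.sets_into_space[OF R(1)]
    by (intro exI[of _ ?cover]) (auto simp: less_top[symmetric] image_subset_iff)
qed

lemma (in sigma_finite_measure) obtain_finite_positive_subset:
  assumes B: "B \<in> sets M" and pos: "emeasure M B \<noteq> 0"
  obtains B' where "B' \<in> sets M" "B' \<subseteq> B" "0 < emeasure M B'" "emeasure M B' < \<infinity>"
proof (cases "emeasure M B = \<infinity>")
  case True
  then show ?thesis
    using approx_PInf_emeasure_with_finite[OF B, of 0] that by auto
next
  case False
  then show ?thesis
    using that[OF B] pos by (simp add: less_top zero_less_iff_neq_zero)
qed

lemma (in sigma_finite_measure) null_if_L2_on_trivial:
  assumes A: "A \<in> sets M" and trivial: "\<forall>g\<in>L2_on M A. AE x in M. g x = 0"
  shows "emeasure M A = 0"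
proof (rule ccontr)
  assume "emeasure M A \<noteq> 0"
  then obtain B where B: "B \<in> sets M" "B \<subseteq> A" "0 < emeasure M B" "emeasure M B < \<infinity>"
    using obtain_finite_positive_subset[OF A] by blast
  then have "(\<lambda>x. indicator B x :: complex) \<in> L2_on M A"
    using indicator_L2[OF B(1,4)] by (auto simp: L2_on_def indicator_def)
  then have "AE x in M. x \<notin> B"
    using trivial by (auto elim!: AE_mp simp: indicator_def)
  then show False
    using B by (simp add: AE_iff_null_sets[symmetric] null_sets_def)
qed

lemma projective_system_sigma_finite:
  assumes "kgraph k L r s c d" and "lambda_projective_system k L r s c d M D tau tauc f"
  shows "sigma_finite_measure M"
proof (rule sbfs_sigma_finite)
  show "sbfs M {l\<in>L. d l = (\<lambda>_. 0)} D tau (tauc (\<lambda>_. 0))"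
    using assms(2) by (simp add: lambda_projective_system_def lambda_sbfs_def Nk_def)
  show "countable {l\<in>L. d l = (\<lambda>_. 0)}"
    using assms(1) by (simp add: kgraph_def)
qed

theorem proposition4p6:
  fixes k :: nat and L :: "'a set" and r s :: "'a \<Rightarrow> 'a" and c :: "'a \<Rightarrow> 'a \<Rightarrow> 'a"
    and d :: "'a \<Rightarrow> nat \<Rightarrow> nat" and M :: "'x measure" and D :: "'a \<Rightarrow> 'x set"
    and tau :: "'a \<Rightarrow> 'x \<Rightarrow> 'x" and tauc :: "(nat \<Rightarrow> nat) \<Rightarrow> 'x \<Rightarrow> 'x"
    and f :: "'a \<Rightarrow> 'x \<Rightarrow> complex"
  assumes "kgraph k L r s c d"
    and "row_finite k L r d"
    and "no_sources k L r d"
    and "lambda_projective_system k L r s c d M D tau tauc f"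
    and "irreducible_rep M L (kg_rep f tauc d)"
  shows "jointly_ergodic M (Nk k) tauc"
  unfolding jointly_ergodic_def
proof (intro ballI impI)
  fix A assume A: "A \<in> sets M"
    and inv: "\<forall>j\<in>Nk k. emeasure M ((A - (tauc j -` A \<inter> space M)) \<union> ((tauc j -` A \<inter> space M) - A)) = 0"
  interpret sigma_finite_measure M
    by (rule projective_system_sigma_finite[OF assms(1,4)])
  have "(\<forall>g\<in>L2_on M A. AE x in M. g x = 0) \<or> L2 M \<subseteq> L2_on M A"
    using assms(5) l2_closed_subspace_L2_on[OF A] rep_invariant_L2_on[OF assms(1,4) A inv]
    unfolding irreducible_rep_def by blast
  then show "emeasure M A = 0 \<or> emeasure M (space M - A) = 0"
  proof
    assume "\<forall>g\<in>L2_on M A. AE x in M. g x = 0"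
    then show ?thesis using null_if_L2_on_trivial[OF A] by blast
  next
    assume "L2 M \<subseteq> L2_on M A"
    then have "\<forall>g\<in>L2_on M (space M - A). AE x in M. g x = 0"
      by (auto simp: L2_on_def subset_iff elim!: AE_mp)
    then show ?thesis using null_if_L2_on_trivial[of "space M - A"] A by blast
  qed
qed

end
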